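(* Let $\mathcal H$ be the Hilbert space of $n$ qubits, $d=2^n$. Let $\mathsf H_0=\{|\Psi\rangle\langle\Psi| : |\Psi\rangle=|\phi\rangle\otimes|\psi\rangle,\ |\phi\rangle,|\psi\rangle\in\mathcal H \text{ unit vectors}\}$ and $\mathsf H_1=\{|\Psi\rangle\langle\Psi| : |\Psi\rangle\in\mathcal H^{\otimes2}\text{ maximally entangled}\}$. Then for every POVM $\{M_0,M_1\}$ on $\mathcal H^{\otimes 2}$ (outcome $i$ meaning "the state is in $\mathsf H_i$"), $$\sup_{\rho\in\mathsf H_0}\operatorname{tr}(M_1\rho)+\sup_{\rho\in\mathsf H_1}\operatorname{tr}(M_0\rho)\ \ge\ 1;$$ in particular, if $\operatorname{tr}(M_0\rho)\le\delta$ for all $\rho\in\mathsf H_1$, then $\operatorname{tr}(M_1\rho)\ge1-\delta$ for some $\rho\in\mathsf H_0$, i.e., no measurement distinguishes $\mathsf H_0$ from $\mathsf H_1$ better than guessing at random.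
   Context: A pure state $|\Psi\rangle\in\mathcal H^{\otimes 2}$ is maximally entangled if $|\Psi\rangle=\sum_{i=1}^d\alpha_i|e_i\rangle\otimes|f_i\rangle$ with $|\alpha_i|^2=1/d$ for all $i$, for some orthonormal bases $\{|e_i\rangle\}$ and $\{|f_i\rangle\}$ of $\mathcal H$. A POVM $\{M_0,M_1\}$ is a pair of positive semidefinite operators with $M_0+M_1=I$; outcome $i$ occurs with probability $\operatorname{tr}(M_i\rho)$. *)

theory Defs
  imports Complex_Main "Jordan_Normal_Form.Matrix" "Jordan_Normal_Form.Schur_Decomposition"
begin

text \<open>The space of n qubits is \<open>carrier_vec (2^n)\<close>;
  the two-fold tensor product has dimension d*d, with basis index \<open>i*d + j\<close> for e_i (x) e_j.\<close>

definition trace_mat :: "complex mat \<Rightarrow> complex" where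
  "trace_mat A = (\<Sum>i<dim_row A. A $$ (i, i))"

definition tensor_vec :: "complex vec \<Rightarrow> complex vec \<Rightarrow> complex vec" where
  "tensor_vec u v = vec (dim_vec u * dim_vec v) (\<lambda>k. u $ (k div dim_vec v) * v $ (k mod dim_vec v))"

definition outer_proj :: "complex vec \<Rightarrow> complex mat" where
  "outer_proj v = mat (dim_vec v) (dim_vec v) (\<lambda>(i, j). v $ i * cnj (v $ j))"

definition unit_vector :: "nat \<Rightarrow> complex vec \<Rightarrow> bool" where
  "unit_vector d v \<longleftrightarrow> v \<in> carrier_vec d \<and> v \<bullet>c v = 1"

definition orthonormal_basis :: "nat \<Rightarrow> (nat \<Rightarrow> complex vec) \<Rightarrow> bool" where
  "orthonormal_basis d e \<longleftrightarrow>
     (\<forall>i<d. e i \<in> carrier_vec d) \<and>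
     (\<forall>i<d. \<forall>j<d. e i \<bullet>c e j = (if i = j then 1 else 0))"

definition maximally_entangled :: "nat \<Rightarrow> complex vec \<Rightarrow> bool" where
  "maximally_entangled d \<Psi> \<longleftrightarrow>
     (\<exists>e f (\<alpha> :: nat \<Rightarrow> complex).
        orthonormal_basis d e \<and> orthonormal_basis d f \<and>
        (\<forall>i<d. (cmod (\<alpha> i))\<^sup>2 = 1 / real d) \<and>
        \<Psi> = vec (d * d) (\<lambda>k. \<Sum>i<d. \<alpha> i * tensor_vec (e i) (f i) $ k))"

definition psd :: "nat \<Rightarrow> complex mat \<Rightarrow> bool" where
  "psd N M \<longleftrightarrow> M \<in> carrier_mat N N \<and> mat_adjoint M = M \<and>
     (\<forall>v \<in> carrier_vec N. 0 \<le> Re ((M *\<^sub>v v) \<bullet>c v))"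

definition two_outcome_povm :: "nat \<Rightarrow> complex mat \<Rightarrow> complex mat \<Rightarrow> bool" where
  "two_outcome_povm N M0 M1 \<longleftrightarrow> psd N M0 \<and> psd N M1 \<and> M0 + M1 = 1\<^sub>m N"

definition product_states :: "nat \<Rightarrow> complex mat set" where
  "product_states d = {outer_proj (tensor_vec \<phi> \<psi>) | \<phi> \<psi>. unit_vector d \<phi> \<and> unit_vector d \<psi>}"

definition max_entangled_states :: "nat \<Rightarrow> complex mat set" where
  "max_entangled_states d = {outer_proj \<Psi> | \<Psi>. \<Psi> \<in> carrier_vec (d * d) \<and> maximally_entangled d \<Psi>}"

text \<open>Outcome probability \<open>tr(M \<rho>)\<close> (a real number for PSD M and density \<rho>).\<close>
definition outcome_prob :: "complex mat \<Rightarrow> complex mat \<Rightarrow> real" where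
  "outcome_prob M \<rho> = Re (trace_mat (M * \<rho>))"

end

theory Submission
  imports Defs "HOL-Library.Real_Mod"
begin

text \<open>The Fourier states \<Psi>a = (1 / sqrt d) \<Sum>i \<omega>^(a i) |ii\<rangle>, a < d, \<omega> = exp (2 \<pi> i / d), are maximally
  entangled, and by the orthogonality of the characters their average dephases in the basis |ii\<rangle>:
  (1/d) \<Sum>a \<langle>\<Psi>a|M|\<Psi>a\<rangle> = (1/d) \<Sum>i \<langle>ii|M|ii\<rangle>. As the |ii\<rangle> are product states, the two suprema add
  up to at least (1/d) \<Sum>i \<langle>ii|M0 + M1|ii\<rangle> = 1. Both suprema are finite because all the states
  involved are pure and M0, M1 \<le> I.\<close>

lemma mult_mat_vec_lincomb:
  fixes a :: "'i \<Rightarrow> complex"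
  assumes M: "M \<in> carrier_mat nr N" and x: "\<And>i. i \<in> I \<Longrightarrow> x i \<in> carrier_vec N"
  shows "M *\<^sub>v vec N (\<lambda>k. \<Sum>i\<in>I. a i * x i $ k) = vec nr (\<lambda>k. \<Sum>i\<in>I. a i * (M *\<^sub>v x i) $ k)"
proof (rule eq_vecI)
  fix k assume "k < dim_vec (vec nr (\<lambda>k. \<Sum>i\<in>I. a i * (M *\<^sub>v x i) $ k))"
  then have k: "k < nr" by simp
  have "(M *\<^sub>v vec N (\<lambda>k. \<Sum>i\<in>I. a i * x i $ k)) $ k = (\<Sum>l<N. M $$ (k, l) * (\<Sum>i\<in>I. a i * x i $ l))"
    using M k by (simp add: scalar_prod_def row_def lessThan_atLeast0)
  also have "\<dots> = (\<Sum>l<N. \<Sum>i\<in>I. a i * (M $$ (k, l) * x i $ l))"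
    by (intro sum.cong refl) (simp add: sum_distrib_left mult.left_commute)
  also have "\<dots> = (\<Sum>i\<in>I. a i * (\<Sum>l<N. M $$ (k, l) * x i $ l))"
    by (simp add: sum_distrib_left sum.swap[of _ "{..<N}" I])
  also have "\<dots> = (\<Sum>i\<in>I. a i * (M *\<^sub>v x i) $ k)"
    using M k by (auto simp: scalar_prod_def row_def lessThan_atLeast0 carrier_vecD[OF x] intro!: sum.cong)
  finally show "(M *\<^sub>v vec N (\<lambda>k. \<Sum>i\<in>I. a i * x i $ k)) $ k = vec nr (\<lambda>k. \<Sum>i\<in>I. a i * (M *\<^sub>v x i) $ k) $ k"
    using k by simp
qed (use M in simp)

lemma cscalar_prod_lincomb:
  fixes a b :: "'i \<Rightarrow> complex"
  assumes x: "\<And>i. i \<in> I \<Longrightarrow> x i \<in> carrier_vec N" and y: "\<And>j. j \<in> J \<Longrightarrow> y j \<in> carrier_vec N"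
  shows "vec N (\<lambda>k. \<Sum>i\<in>I. a i * x i $ k) \<bullet>c vec N (\<lambda>k. \<Sum>j\<in>J. b j * y j $ k)
       = (\<Sum>i\<in>I. \<Sum>j\<in>J. a i * cnj (b j) * (x i \<bullet>c y j))"
proof -
  have "vec N (\<lambda>k. \<Sum>i\<in>I. a i * x i $ k) \<bullet>c vec N (\<lambda>k. \<Sum>j\<in>J. b j * y j $ k)
      = (\<Sum>k<N. (\<Sum>i\<in>I. a i * x i $ k) * (\<Sum>j\<in>J. cnj (b j) * cnj (y j $ k)))"
    by (simp add: scalar_prod_def lessThan_atLeast0 cnj_sum)
  also have "\<dots> = (\<Sum>k<N. \<Sum>i\<in>I. \<Sum>j\<in>J. a i * cnj (b j) * (x i $ k * cnj (y j $ k)))"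
    by (intro sum.cong refl) (simp add: sum_product algebra_simps)
  also have "\<dots> = (\<Sum>i\<in>I. \<Sum>j\<in>J. a i * cnj (b j) * (\<Sum>k<N. x i $ k * cnj (y j $ k)))"
    by (simp add: sum_distrib_left sum.swap[of _ "{..<N}" I] sum.swap[of _ "{..<N}" J])
  also have "\<dots> = (\<Sum>i\<in>I. \<Sum>j\<in>J. a i * cnj (b j) * (x i \<bullet>c y j))"
    by (intro sum.cong refl) (simp add: scalar_prod_def lessThan_atLeast0 carrier_vecD[OF y])
  finally show ?thesis .
qed

lemma conjugate_unit_vec [simp]: "conjugate (unit_vec n i :: complex vec) = unit_vec n i"
  by (auto simp: unit_vec_def conjugate_vec_def)

lemma mult_mat_vec_unit_vec_cscalar_prod:
  fixes M :: "complex mat"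
  assumes M: "M \<in> carrier_mat n n" and "k < n" "l < n"
  shows "(M *\<^sub>v unit_vec n l) \<bullet>c unit_vec n k = M $$ (k, l)"
proof -
  have "(M *\<^sub>v unit_vec n l) \<bullet>c unit_vec n k = (M *\<^sub>v unit_vec n l) $ k"
    using \<open>k < n\<close> by simp
  also have "\<dots> = row M k \<bullet> unit_vec n l"
    using M \<open>k < n\<close> by simp
  also have "\<dots> = M $$ (k, l)"
    using M \<open>k < n\<close> \<open>l < n\<close> by simp
  finally show ?thesis .
qed

lemma trace_mat_mult_outer_proj:
  assumes v: "v \<in> carrier_vec n" and M: "M \<in> carrier_mat n n"
  shows "trace_mat (M * outer_proj v) = (M *\<^sub>v v) \<bullet>c v"
  using v M
  by (auto simp: trace_mat_def outer_proj_def scalar_prod_def row_def col_def sum_distrib_left sum_distrib_right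
      lessThan_atLeast0 ac_simps intro!: sum.cong)

lemma sum_lessThan_mult_div_mod:
  fixes m n :: nat
  shows "(\<Sum>k<m * n. g (k div n) (k mod n)) = (\<Sum>i<m. \<Sum>j<n. g i j)"
proof -
  have "(\<Sum>k<m * n. g (k div n) (k mod n)) = (\<Sum>i<m. \<Sum>k\<in>{i * n..<i * n + n}. g (k div n) (k mod n))"
    by (rule sum.nat_group[symmetric])
  also have "\<dots> = (\<Sum>i<m. \<Sum>j<n. g i j)"
  proof (rule sum.cong[OF refl])
    fix i
    show "(\<Sum>k\<in>{i * n..<i * n + n}. g (k div n) (k mod n)) = (\<Sum>j<n. g i j)"
      using sum.shift_bounds_nat_ivl[of "\<lambda>k. g (k div n) (k mod n)" 0 "i * n" n]
      by (simp add: add.commute atLeast0LessThan)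
  qed
  finally show ?thesis .
qed

lemma tensor_vec_cscalar_prod:
  assumes "u \<in> carrier_vec m" "u' \<in> carrier_vec m" "v \<in> carrier_vec n" "v' \<in> carrier_vec n"
  shows "tensor_vec u v \<bullet>c tensor_vec u' v' = (u \<bullet>c u') * (v \<bullet>c v')"
proof -
  have "tensor_vec u v \<bullet>c tensor_vec u' v'
      = (\<Sum>k<m * n. u $ (k div n) * v $ (k mod n) * cnj (u' $ (k div n) * v' $ (k mod n)))"
    using assms by (simp add: tensor_vec_def scalar_prod_def lessThan_atLeast0)
  also have "\<dots> = (\<Sum>i<m. \<Sum>j<n. u $ i * cnj (u' $ i) * (v $ j * cnj (v' $ j)))"
    using sum_lessThan_mult_div_mod[where g = "\<lambda>i j. u $ i * cnj (u' $ i) * (v $ j * cnj (v' $ j))" and m = m and n = n]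
    by (simp add: ac_simps)
  also have "\<dots> = (u \<bullet>c u') * (v \<bullet>c v')"
    using assms by (simp add: scalar_prod_def lessThan_atLeast0 sum_product)
  finally show ?thesis .
qed

lemma tensor_vec_carrier: "u \<in> carrier_vec m \<Longrightarrow> v \<in> carrier_vec n \<Longrightarrow> tensor_vec u v \<in> carrier_vec (m * n)"
  by (simp add: tensor_vec_def)

lemma unit_vector_tensor_vec:
  "unit_vector m u \<Longrightarrow> unit_vector n v \<Longrightarrow> unit_vector (m * n) (tensor_vec u v)"
  using tensor_vec_cscalar_prod[of u m u v n v] by (simp add: unit_vector_def tensor_vec_carrier)

lemma tensor_vec_unit_vec:
  assumes "i < m" "j < n"
  shows "tensor_vec (unit_vec m i) (unit_vec n j) = unit_vec (m * n) (i * n + j)"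
proof (rule eq_vecI)
  fix k assume "k < dim_vec (unit_vec (m * n) (i * n + j))"
  then have "k < m * n" "k div n < m" "k mod n < n"
    using assms by (auto simp: less_mult_imp_div_less)
  moreover have "k div n = i \<and> k mod n = j \<longleftrightarrow> k = i * n + j"
    using assms by auto
  ultimately show "tensor_vec (unit_vec m i) (unit_vec n j) $ k = unit_vec (m * n) (i * n + j) $ k"
    by (auto simp: tensor_vec_def unit_vec_def)
qed (simp add: tensor_vec_def)

lemma orthonormal_basis_unit_vec: "orthonormal_basis d (unit_vec d)"
  by (simp add: orthonormal_basis_def)

lemma unit_vector_unit_vec: "i < d \<Longrightarrow> unit_vector d (unit_vec d i)"
  by (simp add: unit_vector_def)

lemma maximally_entangled_unit_vector:
  assumes "0 < d" "maximally_entangled d \<Psi>"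
  shows "unit_vector (d * d) \<Psi>"
proof -
  obtain e f and \<alpha> :: "nat \<Rightarrow> complex" where e: "orthonormal_basis d e" and f: "orthonormal_basis d f"
    and \<alpha>: "\<forall>i<d. (cmod (\<alpha> i))\<^sup>2 = 1 / real d"
    and \<Psi>: "\<Psi> = vec (d * d) (\<lambda>k. \<Sum>i<d. \<alpha> i * tensor_vec (e i) (f i) $ k)"
    using assms(2) unfolding maximally_entangled_def by blast
  have ef: "e i \<in> carrier_vec d" "f i \<in> carrier_vec d" if "i < d" for i
    using e f that by (auto simp: orthonormal_basis_def)
  have orthonormal: "tensor_vec (e i) (f i) \<bullet>c tensor_vec (e j) (f j) = (if i = j then 1 else 0)"
    if "i < d" "j < d" for i j
    using e f that tensor_vec_cscalar_prod[OF ef(1)[OF that(1)] ef(1)[OF that(2)] ef(2)[OF that(1)] ef(2)[OF that(2)]]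
    by (simp add: orthonormal_basis_def)
  have "\<Psi> \<bullet>c \<Psi> = (\<Sum>i<d. \<Sum>j<d. \<alpha> i * cnj (\<alpha> j) * (tensor_vec (e i) (f i) \<bullet>c tensor_vec (e j) (f j)))"
    unfolding \<Psi> by (rule cscalar_prod_lincomb) (auto intro: tensor_vec_carrier ef)
  also have "\<dots> = (\<Sum>i<d. \<Sum>j<d. if i = j then \<alpha> i * cnj (\<alpha> i) else 0)"
    by (intro sum.cong refl) (simp add: orthonormal)
  also have "\<dots> = (\<Sum>i<d. of_real (1 / real d))"
    using \<alpha> by (intro sum.cong refl) (simp add: complex_mult_cnj cmod_power2 flip: of_real_power)
  also have "\<dots> = 1"
    using assms(1) by simp
  finally show ?thesis
    unfolding unit_vector_def \<Psi> by simp
qed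

lemma outcome_prob_outer_proj:
  "v \<in> carrier_vec n \<Longrightarrow> M \<in> carrier_mat n n \<Longrightarrow> outcome_prob M (outer_proj v) = Re ((M *\<^sub>v v) \<bullet>c v)"
  by (simp add: outcome_prob_def trace_mat_mult_outer_proj)

lemma outcome_prob_outer_proj_unit_vec:
  "M \<in> carrier_mat n n \<Longrightarrow> k < n \<Longrightarrow> outcome_prob M (outer_proj (unit_vec n k)) = Re (M $$ (k, k))"
  by (simp add: outcome_prob_outer_proj[of _ n] mult_mat_vec_unit_vec_cscalar_prod)

lemma carrier_mat_right_summand:
  "A \<in> carrier_mat n n \<Longrightarrow> A + B = 1\<^sub>m n \<Longrightarrow> B \<in> carrier_mat n n"
  by (metis carrier_matI index_add_mat(2,3) index_one_mat(2,3))

lemma outcome_prob_le_one: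
  assumes P: "psd n P" and PM: "P + M = 1\<^sub>m n" and v: "unit_vector n v"
  shows "outcome_prob M (outer_proj v) \<le> 1"
proof -
  have Pc: "P \<in> carrier_mat n n" using P by (simp add: psd_def)
  have Mc: "M \<in> carrier_mat n n" using carrier_mat_right_summand[OF Pc PM] .
  have vc: "v \<in> carrier_vec n" and vv: "v \<bullet>c v = 1" using v by (auto simp: unit_vector_def)
  have "(P *\<^sub>v v) \<bullet>c v + (M *\<^sub>v v) \<bullet>c v = ((P + M) *\<^sub>v v) \<bullet>c v"
    using Pc Mc vc by (simp add: add_mult_distrib_mat_vec add_scalar_prod_distrib[of _ n])
  also have "\<dots> = 1"
    using PM vc vv by simp
  finally have "Re ((M *\<^sub>v v) \<bullet>c v) = 1 - Re ((P *\<^sub>v v) \<bullet>c v)"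
    by (metis add_diff_cancel_left' minus_complex.simps(1) one_complex.simps(1))
  moreover have "0 \<le> Re ((P *\<^sub>v v) \<bullet>c v)"
    using P vc by (simp add: psd_def)
  ultimately show ?thesis
    using vc Mc by (simp add: outcome_prob_outer_proj)
qed

lemma bdd_above_outcome_prob_pure_states:
  assumes "psd n P" "P + M = 1\<^sub>m n" and pure: "\<And>\<rho>. \<rho> \<in> S \<Longrightarrow> \<exists>v. unit_vector n v \<and> \<rho> = outer_proj v"
  shows "bdd_above (outcome_prob M ` S)"
proof (rule bdd_aboveI2)
  fix \<rho> assume "\<rho> \<in> S"
  with pure obtain v where "unit_vector n v" "\<rho> = outer_proj v" by blast
  with assms(1,2) show "outcome_prob M \<rho> \<le> 1" by (simp add: outcome_prob_le_one)
qed

lemma product_states_pure: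
  "\<rho> \<in> product_states d \<Longrightarrow> \<exists>v. unit_vector (d * d) v \<and> \<rho> = outer_proj v"
  unfolding product_states_def by (auto intro: unit_vector_tensor_vec)

lemma max_entangled_states_pure:
  "0 < d \<Longrightarrow> \<rho> \<in> max_entangled_states d \<Longrightarrow> \<exists>v. unit_vector (d * d) v \<and> \<rho> = outer_proj v"
  unfolding max_entangled_states_def by (auto intro: maximally_entangled_unit_vector)

lemma diagonal_product_state:
  "i < d \<Longrightarrow> outer_proj (unit_vec (d * d) (i * d + i)) \<in> product_states d"
  unfolding product_states_def
  by (auto simp flip: tensor_vec_unit_vec intro!: exI unit_vector_unit_vec)

lemma sum_cis_roots_of_unity:
  fixes k :: int
  assumes d: "0 < d"
  shows "(\<Sum>a<d. cis (2 * pi * real a * of_int k / real d)) = (if int d dvd k then of_nat d else 0)"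
proof (cases "int d dvd k")
  case True
  then obtain q where q: "k = int d * q" by blast
  have "cis (2 * pi * real a * of_int k / real d) = 1" for a
  proof -
    have "2 * pi * real a * of_int k / real d = 2 * pi * of_int (int a * q)"
      using d by (simp add: q field_simps)
    then show ?thesis by simp
  qed
  with True show ?thesis by simp
next
  case False
  define z where "z = cis (2 * pi * of_int k / real d)"
  have pow: "z ^ a = cis (2 * pi * real a * of_int k / real d)" for a
    by (simp add: z_def DeMoivre mult.commute mult.left_commute)
  have "z \<noteq> 1"
  proof
    assume "z = 1"
    then obtain m where "2 * pi * of_int k / real d = of_int m * (2 * pi)"
      by (auto simp: z_def cis_eq_1_iff)
    then have "of_int k = real_of_int (int d * m)"
      using d by (simp add: field_simps)
    with False show False
      by (metis dvd_triv_left of_int_eq_iff)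
  qed
  moreover have "z ^ d = 1"
  proof -
    have "2 * pi * real d * of_int k / real d = 2 * pi * of_int k"
      using d by simp
    then show ?thesis
      unfolding pow by (metis cis_multiple_2pi Ints_of_int)
  qed
  ultimately have "(\<Sum>a<d. z ^ a) = 0"
    by (simp add: geometric_sum)
  with False show ?thesis
    by (simp add: pow)
qed

definition fourier_coeff :: "nat \<Rightarrow> nat \<Rightarrow> nat \<Rightarrow> complex" where
  "fourier_coeff d a i = cis (2 * pi * real a * real i / real d) / complex_of_real (sqrt (real d))"

lemma cmod_fourier_coeff: "(cmod (fourier_coeff d a i))\<^sup>2 = 1 / real d"
  by (simp add: fourier_coeff_def norm_divide power_divide)

lemma fourier_coeff_orthogonal:
  assumes "i < d" "j < d"
  shows "(\<Sum>a<d. fourier_coeff d a i * cnj (fourier_coeff d a j)) = (if i = j then 1 else 0)"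
proof -
  have d: "0 < d" using assms by simp
  have "fourier_coeff d a i * cnj (fourier_coeff d a j)
      = cis (2 * pi * real a * of_int (int i - int j) / real d) / of_nat d" for a
  proof -
    have "complex_of_real (sqrt (real d)) * complex_of_real (sqrt (real d)) = of_nat d"
      by (simp flip: of_real_mult)
    moreover have "2 * pi * real a * real i / real d - 2 * pi * real a * real j / real d
        = 2 * pi * real a * of_int (int i - int j) / real d"
      using d by (simp add: field_simps)
    ultimately show ?thesis
      by (simp add: fourier_coeff_def cis_cnj cis_mult flip: diff_conv_add_uminus)
  qed
  then have "(\<Sum>a<d. fourier_coeff d a i * cnj (fourier_coeff d a j))
      = (\<Sum>a<d. cis (2 * pi * real a * of_int (int i - int j) / real d)) / of_nat d"
    by (simp add: sum_divide_distrib)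
  also have "\<dots> = (if int d dvd (int i - int j) then 1 else 0)"
    using d by (simp only: sum_cis_roots_of_unity) simp
  also have "int d dvd (int i - int j) \<longleftrightarrow> i = j"
    using assms dvd_imp_le_int[of "int i - int j" "int d"] by (cases "i = j") (simp, arith)
  finally show ?thesis .
qed

definition fourier_state :: "nat \<Rightarrow> nat \<Rightarrow> complex vec" where
  "fourier_state d a = vec (d * d) (\<lambda>k. \<Sum>i<d. fourier_coeff d a i * unit_vec (d * d) (i * d + i) $ k)"

lemma diagonal_index_less:
  fixes i d :: nat
  assumes "i < d"
  shows "i * d + i < d * d"
proof -
  have "i * d + i < Suc i * d" using assms by simp
  also have "\<dots> \<le> d * d" using assms by (intro mult_le_mono1) simp
  finally show ?thesis .
qed

lemma fourier_state_max_entangled: "outer_proj (fourier_state d a) \<in> max_entangled_states d"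
proof -
  have "fourier_state d a = vec (d * d) (\<lambda>k. \<Sum>i<d. fourier_coeff d a i * tensor_vec (unit_vec d i) (unit_vec d i) $ k)"
    unfolding fourier_state_def by (intro eq_vecI) (simp_all add: tensor_vec_unit_vec)
  then have "maximally_entangled d (fourier_state d a)"
    unfolding maximally_entangled_def using orthonormal_basis_unit_vec cmod_fourier_coeff by blast
  then show ?thesis
    unfolding max_entangled_states_def fourier_state_def by auto
qed

lemma fourier_state_quadratic_form:
  assumes M: "M \<in> carrier_mat (d * d) (d * d)"
  shows "(M *\<^sub>v fourier_state d a) \<bullet>c fourier_state d a
       = (\<Sum>i<d. \<Sum>j<d. fourier_coeff d a i * cnj (fourier_coeff d a j) * M $$ (j * d + j, i * d + i))"
proof -
  have "(M *\<^sub>v fourier_state d a) \<bullet>c fourier_state d a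
      = (\<Sum>i<d. \<Sum>j<d. fourier_coeff d a i * cnj (fourier_coeff d a j)
           * ((M *\<^sub>v unit_vec (d * d) (i * d + i)) \<bullet>c unit_vec (d * d) (j * d + j)))"
    unfolding fourier_state_def mult_mat_vec_lincomb[OF M unit_vec_carrier]
    by (rule cscalar_prod_lincomb) (use M in auto)
  also have "\<dots> = (\<Sum>i<d. \<Sum>j<d. fourier_coeff d a i * cnj (fourier_coeff d a j) * M $$ (j * d + j, i * d + i))"
    using M by (intro sum.cong refl) (simp add: mult_mat_vec_unit_vec_cscalar_prod diagonal_index_less)
  finally show ?thesis .
qed

lemma sum_outcome_prob_fourier_states:
  assumes M: "M \<in> carrier_mat (d * d) (d * d)"
  shows "(\<Sum>a<d. outcome_prob M (outer_proj (fourier_state d a))) = (\<Sum>i<d. Re (M $$ (i * d + i, i * d + i)))"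
proof -
  have "(\<Sum>a<d. (M *\<^sub>v fourier_state d a) \<bullet>c fourier_state d a)
      = (\<Sum>i<d. \<Sum>j<d. \<Sum>a<d. fourier_coeff d a i * cnj (fourier_coeff d a j) * M $$ (j * d + j, i * d + i))"
    unfolding fourier_state_quadratic_form[OF M]
    by (rule trans[OF sum.swap], rule sum.cong[OF refl], rule sum.swap)
  also have "\<dots> = (\<Sum>i<d. \<Sum>j<d. (\<Sum>a<d. fourier_coeff d a i * cnj (fourier_coeff d a j)) * M $$ (j * d + j, i * d + i))"
    by (simp add: sum_distrib_right)
  also have "\<dots> = (\<Sum>i<d. \<Sum>j<d. if j = i then M $$ (i * d + i, i * d + i) else 0)"
    by (intro sum.cong refl) (simp add: fourier_coeff_orthogonal)
  also have "\<dots> = (\<Sum>i<d. M $$ (i * d + i, i * d + i))"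
    by simp
  finally show ?thesis
    using M by (simp add: outcome_prob_outer_proj[of _ "d * d"] fourier_state_def flip: Re_sum)
qed

lemma Re_diag_add_eq_one:
  assumes "M0 + M1 = 1\<^sub>m n" "M0 \<in> carrier_mat n n" "M1 \<in> carrier_mat n n" "k < n"
  shows "Re (M0 $$ (k, k)) + Re (M1 $$ (k, k)) = 1"
proof -
  have "M0 $$ (k, k) + M1 $$ (k, k) = (M0 + M1) $$ (k, k)"
    using assms(3,4) by simp
  also have "\<dots> = 1"
    using assms(1,4) by simp
  finally show ?thesis
    by (metis one_complex.sel(1) plus_complex.sel(1))
qed

lemma two_outcome_povm_sup_errors_ge_one:
  assumes d: "0 < d" and povm: "two_outcome_povm (d * d) M0 M1"
  shows "(SUP \<rho>\<in>product_states d. outcome_prob M1 \<rho>) + (SUP \<rho>\<in>max_entangled_states d. outcome_prob M0 \<rho>) \<ge> 1"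
proof -
  define S1 where "S1 = (SUP \<rho>\<in>product_states d. outcome_prob M1 \<rho>)"
  define S0 where "S0 = (SUP \<rho>\<in>max_entangled_states d. outcome_prob M0 \<rho>)"
  have psd: "psd (d * d) M0" "psd (d * d) M1" and sum: "M0 + M1 = 1\<^sub>m (d * d)"
    using povm by (auto simp: two_outcome_povm_def)
  have M0: "M0 \<in> carrier_mat (d * d) (d * d)" and M1: "M1 \<in> carrier_mat (d * d) (d * d)"
    using psd by (auto simp: psd_def)
  have sum': "M1 + M0 = 1\<^sub>m (d * d)"
    using sum M0 M1 by (simp add: comm_add_mat)
  have bdd1: "bdd_above (outcome_prob M1 ` product_states d)"
    using psd(1) sum product_states_pure by (rule bdd_above_outcome_prob_pure_states)
  have bdd0: "bdd_above (outcome_prob M0 ` max_entangled_states d)"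
    using psd(2) sum' max_entangled_states_pure[OF d] by (rule bdd_above_outcome_prob_pure_states)
  have "(\<Sum>i<d. Re (M1 $$ (i * d + i, i * d + i))) \<le> (\<Sum>i<d. S1)"
  proof (rule sum_mono)
    fix i assume "i \<in> {..<d}"
    then show "Re (M1 $$ (i * d + i, i * d + i)) \<le> S1"
      unfolding S1_def using cSUP_upper[OF diagonal_product_state bdd1]
      by (simp add: outcome_prob_outer_proj_unit_vec[OF M1] diagonal_index_less)
  qed
  moreover have "(\<Sum>a<d. outcome_prob M0 (outer_proj (fourier_state d a))) \<le> (\<Sum>a<d. S0)"
    unfolding S0_def by (intro sum_mono cSUP_upper[OF fourier_state_max_entangled bdd0])
  moreover have "(\<Sum>i<d. Re (M0 $$ (i * d + i, i * d + i)) + Re (M1 $$ (i * d + i, i * d + i))) = (\<Sum>i<d. 1)"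
    using sum M0 M1 by (intro sum.cong refl) (simp add: Re_diag_add_eq_one diagonal_index_less)
  ultimately have "real d * 1 \<le> real d * (S1 + S0)"
    by (simp add: sum_outcome_prob_fourier_states[OF M0] sum.distrib algebra_simps)
  then show ?thesis
    using d unfolding S1_def S0_def by simp
qed

theorem theorem6p1:
  fixes n :: nat and M0 M1 :: "complex mat"
  defines "d \<equiv> 2 ^ n"
  assumes "two_outcome_povm (d * d) M0 M1"
  shows "(SUP \<rho>\<in>product_states d. outcome_prob M1 \<rho>)
         + (SUP \<rho>\<in>max_entangled_states d. outcome_prob M0 \<rho>) \<ge> 1"
proof -
  have "0 < d" unfolding d_def by simp
  then show ?thesis using assms(2) by (rule two_outcome_povm_sup_errors_ge_one)
qed

end
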